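(* Let $f$ be a non-increasing differentiable function with a monotone hazard rate (i.e. $\frac{|f'(x)|}{f(x)}$ is non-decreasing in $x$). Let $x_1<x_2$ be points in its domain such that $f(0)=\sqrt e\,f(x_1)\le e\,f(x_2)$. Then $x_2\le 2x_1$. *)

theory Defs
  imports "HOL-Analysis.Analysis"
begin

end

theory Submission
  imports Defs
begin

text \<open>On \<open>[0, x\<^sub>1]\<close> the function \<open>ln f\<close> drops by exactly \<open>1/2\<close>, so the mean value theorem
  yields \<open>c\<^sub>1 \<in> (0, x\<^sub>1)\<close> where the hazard rate \<open>h = \<bar>f'\<bar> / f\<close> equals \<open>1 / (2 x\<^sub>1)\<close>.
  On \<open>(x\<^sub>1, x\<^sub>2)\<close> the log drops by at most \<open>1/2\<close>, again at a rate \<open>h c\<^sub>2 \<ge> h c\<^sub>1\<close> by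
  monotonicity of the hazard rate, so \<open>(x\<^sub>2 - x\<^sub>1) / (2 x\<^sub>1) \<le> 1/2\<close>.\<close>

lemma antimono_on_imp_deriv_nonpos:
  fixes f :: "real \<Rightarrow> real"
  assumes "antimono_on S f" "(f has_real_derivative D) (at x)" "x \<in> interior S"
  shows "D \<le> 0"
proof -
  have "mono_on S (\<lambda>x. - f x)"
    using assms(1) by (auto simp: monotone_on_def)
  moreover have "((\<lambda>x. - f x) has_real_derivative - D) (at x)"
    using assms(2) by (rule DERIV_minus)
  ultimately have "- D \<ge> 0"
    using assms(3) by (rule mono_on_imp_deriv_nonneg)
  then show ?thesis by simp
qed

lemma mvt_ln:
  fixes f f' :: "real \<Rightarrow> real"
  assumes "a < b"
    and pos: "\<And>x. a \<le> x \<Longrightarrow> x \<le> b \<Longrightarrow> f x > 0"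
    and deriv: "\<And>x. a \<le> x \<Longrightarrow> x \<le> b \<Longrightarrow> (f has_real_derivative f' x) (at x within {a..b})"
  shows "\<exists>c\<in>{a<..<b}. ln (f b) - ln (f a) = f' c / f c * (b - a)"
proof -
  have "\<exists>c\<in>{a<..<b}. ln (f b) - ln (f a) = (*) (f' c / f c) (b - a)"
  proof (rule mvt_simple[OF \<open>a < b\<close>])
    fix x assume "a \<le> x" "x \<le> b"
    with pos deriv have "((\<lambda>x. ln (f x)) has_real_derivative f' x / f x) (at x within {a..b})"
      by (auto intro!: derivative_eq_intros)
    then show "((\<lambda>x. ln (f x)) has_derivative (*) (f' x / f x)) (at x within {a..b})"
      by (simp add: has_field_derivative_def)
  qed
  then show ?thesis by simp
qed

lemma ln_decrease_eq_hazard_rate: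
  fixes f f' :: "real \<Rightarrow> real"
  assumes pos: "\<And>x. x \<ge> 0 \<Longrightarrow> f x > 0"
    and deriv: "\<And>x. x \<ge> 0 \<Longrightarrow> (f has_real_derivative f' x) (at x within {0..})"
    and nonincr: "antimono_on {0..} f"
    and "0 \<le> a" "a < b"
  shows "\<exists>c\<in>{a<..<b}. ln (f a) - ln (f b) = \<bar>f' c\<bar> / f c * (b - a)"
proof -
  have "\<And>x. a \<le> x \<Longrightarrow> x \<le> b \<Longrightarrow> (f has_real_derivative f' x) (at x within {a..b})"
    using \<open>0 \<le> a\<close> by (rule_tac has_field_derivative_subset[OF deriv]) auto
  then obtain c where c: "c \<in> {a<..<b}" and mvt: "ln (f b) - ln (f a) = f' c / f c * (b - a)"
    using mvt_ln[of a b f f'] pos \<open>0 \<le> a\<close> \<open>a < b\<close> by auto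
  have "at c within {0..} = at c"
    using c \<open>0 \<le> a\<close> by (intro at_within_interior) auto
  then have "(f has_real_derivative f' c) (at c)"
    using deriv[of c] c \<open>0 \<le> a\<close> by simp
  then have "f' c \<le> 0"
    using c \<open>0 \<le> a\<close> by (intro antimono_on_imp_deriv_nonpos[OF nonincr]) auto
  then show ?thesis
    using c mvt by (intro bexI[of _ c]) (auto simp: algebra_simps)
qed

theorem lemma21:
  fixes f f' :: "real \<Rightarrow> real" and x1 x2 :: real
  assumes pos: "\<And>x. x \<ge> 0 \<Longrightarrow> f x > 0"
    and deriv: "\<And>x. x \<ge> 0 \<Longrightarrow> (f has_real_derivative f' x) (at x within {0..})"
    and nonincr: "antimono_on {0..} f"
    and hazard: "mono_on {0..} (\<lambda>x. \<bar>f' x\<bar> / f x)"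
    and x1: "0 \<le> x1" and x12: "x1 < x2"
    and eq: "f 0 = sqrt (exp 1) * f x1"
    and le: "sqrt (exp 1) * f x1 \<le> exp 1 * f x2"
  shows "x2 \<le> 2 * x1"
proof -
  let ?h = "\<lambda>x. \<bar>f' x\<bar> / f x"
  have sqrt_e: "sqrt (exp 1) = exp (1/2)"
    by (rule real_sqrt_unique) (simp_all add: power2_eq_square flip: exp_add)
  have f_pos: "f 0 > 0" "f x1 > 0" "f x2 > 0"
    using pos x1 x12 by auto
  have drop1: "ln (f 0) - ln (f x1) = 1/2"
    using eq f_pos by (simp add: sqrt_e ln_mult)
  have drop2: "ln (f x1) - ln (f x2) \<le> 1/2"
    using le f_pos by (simp add: sqrt_e ln_mult flip: ln_le_cancel_iff)
  have "x1 \<noteq> 0"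
    using drop1 by auto
  then obtain c1 where c1: "c1 \<in> {0<..<x1}" and h1: "1/2 = ?h c1 * x1"
    using ln_decrease_eq_hazard_rate[OF pos deriv nonincr, of 0 x1] drop1 x1 by auto
  obtain c2 where c2: "c2 \<in> {x1<..<x2}" and h2: "ln (f x1) - ln (f x2) = ?h c2 * (x2 - x1)"
    using ln_decrease_eq_hazard_rate[OF pos deriv nonincr x1 x12] by auto
  have "?h c1 \<le> ?h c2"
    using c1 c2 by (intro mono_onD[OF hazard]) auto
  then have "?h c1 * (x2 - x1) \<le> ?h c1 * x1"
    using h1 h2 drop2 x12 mult_right_mono[of "?h c1" "?h c2" "x2 - x1"] by linarith
  moreover have "?h c1 > 0"
    using h1 x1 by (auto simp: zero_less_mult_iff)
  ultimately have "x2 - x1 \<le> x1"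
    by (rule mult_left_le_imp_le)
  then show ?thesis
    by simp
qed

end
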